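(* Let $f\ge1$, $\lambda_1=\lambda_2=\dots=\lambda_f<1$ be positive reals, $\mu_1,\dots,\mu_f\in\mathbb C$, $\eta\in(-1,1)$, $u\in\mathbb R$, and $$g(s):=e^{\left(u+i\frac{\pi f}{4}\eta\right)(1/2-s)}\prod_{j=1}^f\Gamma(\lambda_js+\mu_j).$$ Let $\rho$ be a pole of $g$ of order $n$ such that $\Re(\lambda_j\rho+\mu_j)\le0$ for $j=1,\dots,f$ and $$\frac{e^{u/\lambda_1}}{\prod_{j=1}^f\left(|1-\lambda_j\rho-\mu_j|-\lambda_j\right)}<\frac12.$$ Let $c_1,\dots,c_n$ be the coefficients of the polar part of $g$ at $\rho$, so that $g(s+\rho)-\sum_{j=1}^nc_js^{-j}$ is holomorphic at $s=0$. Then $$\left|\sum_{l=1}^\infty\operatorname{Res}_{s=\rho-l/\lambda_1}g(s)\right|<\max_j|c_j|.$$ *)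

theory Defs
  imports "HOL-Complex_Analysis.Complex_Analysis"
begin

definition gfun :: "nat \<Rightarrow> (nat \<Rightarrow> real) \<Rightarrow> (nat \<Rightarrow> complex) \<Rightarrow> real \<Rightarrow> real \<Rightarrow> complex \<Rightarrow> complex" where
  "gfun f lam mu eta u s =
     exp ((complex_of_real u + \<i> * complex_of_real (pi * real f / 4 * eta)) * (1/2 - s)) *
     (\<Prod>j=1..f. Gamma (complex_of_real (lam j) * s + mu j))"

end

theory Submission
  imports Defs
begin

(* Since Gamma(z - 1) = Gamma(z) / (z - 1) and all lam_j equal lam, moving s to s - l/lam multiplies g by
   exp(A l/lam) times R_l(s) = prod_j prod_{m=1..l} 1/(lam s + mu_j - m), where A = u + i pi f eta/4.
   Hence the residue of g at rho - l/lam is exp(A l/lam) sum_k c_k [t^(k-1)] R_l(rho + t).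
   Each factor 1/(w + lam t) has Taylor coefficients of absolute sum at most 1/(|w| - lam), and
   Re(lam rho + mu_j) <= 0 gives |lam rho + mu_j - m| >= |1 - lam rho - mu_j| for m >= 1.
   So the l-th residue is at most max_k |c_k| q^l with q = exp(u/lam) / prod_j (|1 - lam rho - mu_j| - lam),
   and q < 1/2 makes the geometric series sum to less than max_k |c_k|. *)

lemma fps_inverse_linear:
  fixes w a :: "'a :: field"
  assumes "w \<noteq> 0"
  shows "inverse (fps_const w + fps_const a * fps_X) = Abs_fps (\<lambda>k. (- a) ^ k / w ^ Suc k)"
proof (rule fps_inverse_unique, rule fps_ext)
  fix k
  show "fps_nth ((fps_const w + fps_const a * fps_X) * Abs_fps (\<lambda>k. (- a) ^ k / w ^ Suc k)) k = fps_nth 1 k"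
    using assms by (cases k) (simp_all add: algebra_simps)
qed

lemma sum_norm_fps_mult_nth_le:
  fixes F G :: "'a :: {real_normed_algebra, comm_ring} fps"
  shows "(\<Sum>k<N. norm (fps_nth (F * G) k)) \<le> (\<Sum>k<N. norm (fps_nth F k)) * (\<Sum>k<N. norm (fps_nth G k))"
proof -
  have "(\<Sum>k<N. norm (fps_nth (F * G) k)) \<le> (\<Sum>k<N. \<Sum>i\<le>k. norm (fps_nth F i) * norm (fps_nth G (k - i)))"
    unfolding fps_mult_nth atLeast0AtMost
    by (intro sum_mono order_trans[OF norm_sum] sum_mono norm_mult_ineq)
  also have "\<dots> = (\<Sum>(i, j)\<in>{(i, j). i + j < N}. norm (fps_nth F i) * norm (fps_nth G j))"
    by (rule sum.triangle_reindex[symmetric])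
  also have "\<dots> \<le> (\<Sum>(i, j)\<in>{..<N} \<times> {..<N}. norm (fps_nth F i) * norm (fps_nth G j))"
    by (rule sum_mono2) auto
  also have "\<dots> = (\<Sum>k<N. norm (fps_nth F k)) * (\<Sum>k<N. norm (fps_nth G k))"
    by (simp add: sum_product sum.cartesian_product)
  finally show ?thesis .
qed

lemma sum_norm_fps_prod_nth_le:
  fixes F :: "'b \<Rightarrow> 'a :: {real_normed_algebra_1, comm_ring_1} fps"
  shows "(\<Sum>k<N. norm (fps_nth (\<Prod>i\<in>I. F i) k)) \<le> (\<Prod>i\<in>I. \<Sum>k<N. norm (fps_nth (F i) k))"
proof (induction I rule: infinite_finite_induct)
  case (insert i I)
  have "(\<Sum>k<N. norm (fps_nth (\<Prod>i\<in>insert i I. F i) k))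
      \<le> (\<Sum>k<N. norm (fps_nth (F i) k)) * (\<Sum>k<N. norm (fps_nth (\<Prod>i\<in>I. F i) k))"
    using insert.hyps by (simp add: sum_norm_fps_mult_nth_le)
  also have "\<dots> \<le> (\<Sum>k<N. norm (fps_nth (F i) k)) * (\<Prod>i\<in>I. \<Sum>k<N. norm (fps_nth (F i) k))"
    by (intro mult_left_mono insert.IH sum_nonneg norm_ge_zero)
  finally show ?case
    using insert.hyps by simp
qed (cases N; simp add: lessThan_Suc_eq_insert_0 sum.reindex)+

lemma sum_norm_fps_inverse_linear_le:
  fixes w :: "'a :: real_normed_field"
  assumes "0 \<le> L" "L < norm w"
  shows "(\<Sum>k<N. norm (fps_nth (inverse (fps_const w + fps_const (of_real L) * fps_X)) k))
           \<le> 1 / (norm w - L)"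
proof -
  define r where "r = L / norm w"
  have w: "norm w > 0"
    using assms by linarith
  then have "w \<noteq> 0"
    by auto
  then have r: "0 \<le> r" "r < 1"
    using assms by (simp_all add: r_def field_simps)
  have "(\<Sum>k<N. norm (fps_nth (inverse (fps_const w + fps_const (of_real L) * fps_X)) k))
          = (\<Sum>k<N. r ^ k) / norm w"
    unfolding fps_inverse_linear[OF \<open>w \<noteq> 0\<close>] sum_divide_distrib using w assms
    by (intro sum.cong refl) (simp add: norm_divide norm_mult norm_power r_def field_simps)
  also have "\<dots> = (1 - r ^ N) / (1 - r) / norm w"
    using r by (simp add: sum_gp_strict)
  also have "\<dots> \<le> 1 / (1 - r) / norm w"
    using r w by (intro divide_right_mono) auto
  also have "\<dots> = 1 / (norm w - L)"
    using w assms(2) by (simp add: r_def divide_simps)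
  finally show ?thesis .
qed

lemma sum_norm_fps_prod_inverse_linear_le:
  fixes w :: "'b \<Rightarrow> 'a :: real_normed_field"
  assumes "0 \<le> L" "\<And>i. i \<in> I \<Longrightarrow> L < norm (w i)"
  shows "(\<Sum>k<N. norm (fps_nth (\<Prod>i\<in>I. inverse (fps_const (w i) + fps_const (of_real L) * fps_X)) k))
           \<le> (\<Prod>i\<in>I. 1 / (norm (w i) - L))"
  using assms
  by (intro order_trans[OF sum_norm_fps_prod_nth_le] prod_mono conjI sum_nonneg norm_ge_zero
      sum_norm_fps_inverse_linear_le)

lemma residue_sum:
  assumes "finite K" "open S" "z \<in> S" "\<And>k. k \<in> K \<Longrightarrow> F k holomorphic_on S - {z}"
  shows "residue (\<lambda>t. \<Sum>k\<in>K. F k t) z = (\<Sum>k\<in>K. residue (F k) z)"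
  using assms(1,4)
proof (induction K rule: finite_induct)
  case (insert k K)
  then have "residue (\<lambda>t. F k t + (\<Sum>k\<in>K. F k t)) z = residue (F k) z + residue (\<lambda>t. \<Sum>k\<in>K. F k t) z"
    using assms(2,3) by (intro residue_add) (auto intro!: holomorphic_on_sum)
  with insert show ?case by simp
qed (simp add: residue_const)

lemma residue_polar_part_mult:
  assumes "R has_fps_expansion Rs" "h analytic_on {0}"
    and "\<forall>\<^sub>F t in at 0. F t = ((\<Sum>k=1..n. c k / t ^ k) + h t) * R t"
  shows "residue F 0 = (\<Sum>k<n. c (Suc k) * fps_nth Rs k)"
proof -
  obtain S where S: "open S" "0 \<in> S" "R holomorphic_on S"
    using has_fps_expansion_imp_holomorphic[OF assms(1)] by blast
  obtain r where r: "r > 0" "h holomorphic_on ball 0 r"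
    using assms(2) by (auto simp: analytic_on_def)
  define S' where "S' = S \<inter> ball 0 r"
  have S': "open S'" "0 \<in> S'" "R holomorphic_on S'" "h holomorphic_on S'"
    using S r by (auto simp: S'_def)
  have "residue F 0 = residue (\<lambda>t. (\<Sum>k<n. c (Suc k) * (R t / t ^ Suc k)) + h t * R t) 0"
    using assms(3) by (intro residue_cong) (auto elim!: eventually_mono
        simp: sum.atLeast1_atMost_eq algebra_simps sum_distrib_left sum_distrib_right)
  also have "\<dots> = (\<Sum>k<n. residue (\<lambda>t. c (Suc k) * (R t / t ^ Suc k)) 0) + residue (\<lambda>t. h t * R t) 0"
    using S' by (subst residue_add[OF S'(1,2)]) (auto intro!: holomorphic_intros residue_sum)
  also have "residue (\<lambda>t. h t * R t) 0 = 0"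
    using S' by (intro residue_holo[of S']) (auto intro!: holomorphic_intros)
  also have "(\<Sum>k<n. residue (\<lambda>t. c (Suc k) * (R t / t ^ Suc k)) 0) = (\<Sum>k<n. c (Suc k) * fps_nth Rs k)"
  proof (intro sum.cong refl)
    fix k
    have "residue (\<lambda>t. c (Suc k) * (R t / t ^ Suc k)) 0 = c (Suc k) * residue (\<lambda>t. R t / t ^ Suc k) 0"
      using S' by (intro residue_lmul[OF S'(1,2)]) (auto intro!: holomorphic_intros)
    then show "residue (\<lambda>t. c (Suc k) * (R t / t ^ Suc k)) 0 = c (Suc k) * fps_nth Rs k"
      by (simp only: residue_fps_expansion_over_power_at_0[OF assms(1)])
  qed
  finally show ?thesis by simp
qed

lemma polar_part_nonzero_at_pole:
  assumes "is_pole F \<rho>" "h analytic_on {0}"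
    and "\<forall>\<^sub>F s in at 0. F (s + \<rho>) - (\<Sum>j=1..n. c j / s ^ j) = h s"
  shows "\<exists>j\<in>{1..n}. c j \<noteq> 0"
proof (rule ccontr)
  assume "\<not> (\<exists>j\<in>{1..n}. c j \<noteq> 0)"
  then have "\<forall>\<^sub>F s in at 0. F (\<rho> + s) = h s"
    using assms(3) by (simp add: add.commute)
  moreover have "is_pole (\<lambda>s. F (\<rho> + s)) 0"
    using assms(1) is_pole_shift_0 by blast
  ultimately have "is_pole h 0"
    using is_pole_transform by blast
  with analytic_at_imp_no_pole[OF assms(2)] show False ..
qed

lemma norm_suminf_lt_of_geometric_bound:
  fixes a :: "nat \<Rightarrow> 'a :: banach"
  assumes bound: "\<And>l. norm (a l) \<le> C * q ^ Suc l" and "q < 1/2" "C > 0"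
  shows "summable a \<and> norm (suminf a) < C"
proof -
  have "0 \<le> C * q"
    using order_trans[OF norm_ge_zero bound[of 0]] by simp
  with \<open>C > 0\<close> have "0 \<le> q"
    by (simp add: zero_le_mult_iff)
  then have geom: "summable (\<lambda>l. C * q ^ Suc l)"
    using \<open>q < 1/2\<close> by (simp add: summable_geometric)
  have norm_summable: "summable (\<lambda>l. norm (a l))"
    by (rule summable_comparison_test'[OF geom, where N=0]) (use bound in simp)
  have "norm (suminf a) \<le> (\<Sum>l. norm (a l))"
    by (rule summable_norm[OF norm_summable])
  also have "\<dots> \<le> (\<Sum>l. C * q ^ Suc l)"
    by (rule suminf_le[OF bound norm_summable geom])
  also have "\<dots> = C * q / (1 - q)"
    using \<open>0 \<le> q\<close> \<open>q < 1/2\<close> by (simp add: suminf_mult suminf_geometric mult.assoc)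
  also have "\<dots> < C"
    using \<open>0 \<le> q\<close> \<open>q < 1/2\<close> \<open>C > 0\<close> by (simp add: field_simps)
  finally show ?thesis
    using summable_norm_cancel[OF norm_summable] by blast
qed

lemma one_le_norm_one_minus:
  assumes "Re z \<le> 0"
  shows "1 \<le> cmod (1 - z)"
  using assms complex_Re_le_cmod[of "1 - z"] by simp

lemma norm_one_minus_le_norm_minus_of_nat:
  assumes "Re z \<le> 0" "m \<ge> 1"
  shows "cmod (1 - z) \<le> cmod (z - of_nat m)"
proof -
  have "(1 - Re z)\<^sup>2 \<le> (real m - Re z)\<^sup>2"
    using assms by (intro power_mono) auto
  then have "cmod (1 - z) ^ 2 \<le> cmod (z - of_nat m) ^ 2"
    by (simp add: cmod_power2 power2_commute)
  then show ?thesis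
    by (rule power2_le_imp_le) simp
qed

lemma Gamma_minus_of_nat:
  "Gamma (z - of_nat l) = Gamma (z :: 'a :: Gamma) * (\<Prod>m=1..l. inverse (z - of_nat m))"
proof (induction l)
  case (Suc l)
  have "rGamma (z - of_nat (Suc l)) = (z - of_nat (Suc l)) * rGamma (z - of_nat l)"
    using rGamma_plus1[of "z - of_nat (Suc l)"] by (simp add: algebra_simps)
  then have "Gamma (z - of_nat (Suc l)) = Gamma (z - of_nat l) * inverse (z - of_nat (Suc l))"
    by (simp add: Gamma_def)
  with Suc.IH show ?case by (simp add: prod.nat_ivl_Suc' mult.assoc)
qed simp

lemma gfun_shift:
  assumes "\<forall>j\<in>{1..f}. lam j = L" "L \<noteq> 0"
  shows "gfun f lam mu eta u (s - of_nat l / of_real L) =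
    exp ((of_real u + \<i> * of_real (pi * real f / 4 * eta)) * of_nat l / of_real L) *
    gfun f lam mu eta u s * (\<Prod>j=1..f. \<Prod>m=1..l. inverse (of_real L * s + mu j - of_nat m))"
proof -
  define A where "A = complex_of_real u + \<i> * complex_of_real (pi * real f / 4 * eta)"
  have "gfun f lam mu eta u (s - of_nat l / of_real L) =
      exp (A * (1/2 - s) + A * of_nat l / of_real L) * (\<Prod>j=1..f. Gamma ((of_real L * s + mu j) - of_nat l))"
    unfolding gfun_def A_def[symmetric] using assms
    by (intro arg_cong2[where f = "(*)"] prod.cong refl) (auto simp: algebra_simps)
  also have "\<dots> = exp (A * of_nat l / of_real L) * gfun f lam mu eta u s *
      (\<Prod>j=1..f. \<Prod>m=1..l. inverse (of_real L * s + mu j - of_nat m))"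
  proof -
    have "(\<Prod>j=1..f. Gamma ((of_real L * s + mu j) - of_nat l)) =
        (\<Prod>j=1..f. Gamma (of_real (lam j) * s + mu j)) *
        (\<Prod>j=1..f. \<Prod>m=1..l. inverse (of_real L * s + mu j - of_nat m))"
      unfolding Gamma_minus_of_nat prod.distrib[symmetric] using assms(1) by (intro prod.cong refl) simp
    then show ?thesis
      by (simp only: exp_add gfun_def A_def[symmetric] mult.assoc mult.left_commute)
  qed
  finally show ?thesis by (simp only: A_def)
qed

definition shift_factor_fps :: "nat \<Rightarrow> real \<Rightarrow> (nat \<Rightarrow> complex) \<Rightarrow> nat \<Rightarrow> complex \<Rightarrow> complex fps" where
  "shift_factor_fps f L mu l \<rho> = (\<Prod>j=1..f. \<Prod>m=1..l.
     inverse (fps_const (of_real L * \<rho> + mu j - of_nat m) + fps_const (of_real L) * fps_X))"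

lemma residue_gfun_shifted_pole:
  assumes lam: "\<forall>j\<in>{1..f}. lam j = L" "L \<noteq> 0"
    and nonzero: "\<forall>j\<in>{1..f}. \<forall>m\<in>{1..l}. of_real L * \<rho> + mu j \<noteq> of_nat m"
    and h: "h analytic_on {0}"
    and polar: "\<forall>\<^sub>F s in at 0. gfun f lam mu eta u (s + \<rho>) - (\<Sum>j=1..n. c j / s ^ j) = h s"
  shows "residue (gfun f lam mu eta u) (\<rho> - of_nat l / of_real L) =
    exp ((of_real u + \<i> * of_real (pi * real f / 4 * eta)) * of_nat l / of_real L) *
    (\<Sum>k<n. c (Suc k) * fps_nth (shift_factor_fps f L mu l \<rho>) k)"
proof -
  define E where "E = exp ((of_real u + \<i> * of_real (pi * real f / 4 * eta)) * of_nat l / of_real L)"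
  define R where "R t = E * (\<Prod>j=1..f. \<Prod>m=1..l. inverse ((of_real L * \<rho> + mu j - of_nat m) + of_real L * t))"
    for t
  have "R has_fps_expansion fps_const E * shift_factor_fps f L mu l \<rho>"
    unfolding R_def shift_factor_fps_def using nonzero by (intro fps_expansion_intros) auto
  moreover have "\<forall>\<^sub>F t in at 0. gfun f lam mu eta u (\<rho> - of_nat l / of_real L + t) =
      ((\<Sum>k=1..n. c k / t ^ k) + h t) * R t"
    using polar
  proof (rule eventually_mono)
    fix t
    assume "gfun f lam mu eta u (t + \<rho>) - (\<Sum>j=1..n. c j / t ^ j) = h t"
    then have "gfun f lam mu eta u (\<rho> + t) = (\<Sum>k=1..n. c k / t ^ k) + h t"
      by (simp add: algebra_simps)
    then show "gfun f lam mu eta u (\<rho> - of_nat l / of_real L + t) = ((\<Sum>k=1..n. c k / t ^ k) + h t) * R t"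
      using gfun_shift[OF lam, where s = "\<rho> + t" and l = l]
      by (simp add: R_def E_def algebra_simps)
  qed
  ultimately have "residue (gfun f lam mu eta u) (\<rho> - of_nat l / of_real L) =
      (\<Sum>k<n. c (Suc k) * fps_nth (fps_const E * shift_factor_fps f L mu l \<rho>) k)"
    by (subst residue_shift_0) (rule residue_polar_part_mult[OF _ h])
  then show ?thesis
    by (simp add: E_def sum_distrib_left mult.left_commute)
qed

lemma sum_norm_shift_factor_fps_le:
  assumes "0 \<le> L" "L < 1" "\<forall>j\<in>{1..f}. Re (of_real L * \<rho> + mu j) \<le> 0"
  shows "(\<Sum>k<N. cmod (fps_nth (shift_factor_fps f L mu l \<rho>) k))
           \<le> (1 / (\<Prod>j=1..f. cmod (1 - of_real L * \<rho> - mu j) - L)) ^ l"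
proof -
  define z where "z j = of_real L * \<rho> + mu j" for j
  have z: "L < cmod (1 - z j)" "cmod (1 - z j) \<le> cmod (z j - of_nat m)"
    if "j \<in> {1..f}" "m \<in> {1..l}" for j m
    using that assms one_le_norm_one_minus[of "z j"] norm_one_minus_le_norm_minus_of_nat[of "z j" m]
    by (auto simp: z_def)
  have "(\<Sum>k<N. cmod (fps_nth (shift_factor_fps f L mu l \<rho>) k))
      \<le> (\<Prod>j=1..f. \<Sum>k<N. cmod (fps_nth (\<Prod>m=1..l.
            inverse (fps_const (z j - of_nat m) + fps_const (of_real L) * fps_X)) k))"
    unfolding shift_factor_fps_def z_def by (rule sum_norm_fps_prod_nth_le)
  also have "\<dots> \<le> (\<Prod>j=1..f. (1 / (cmod (1 - z j) - L)) ^ l)"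
  proof (intro prod_mono conjI sum_nonneg norm_ge_zero)
    fix j
    assume j: "j \<in> {1..f}"
    have "(\<Sum>k<N. cmod (fps_nth (\<Prod>m=1..l.
            inverse (fps_const (z j - of_nat m) + fps_const (of_real L) * fps_X)) k))
        \<le> (\<Prod>m=1..l. 1 / (cmod (z j - of_nat m) - L))"
      using j z assms(1) by (intro sum_norm_fps_prod_inverse_linear_le) fastforce+
    also have "\<dots> \<le> (\<Prod>m=1..l. 1 / (cmod (1 - z j) - L))"
      using j z by (intro prod_mono conjI frac_le) (fastforce intro: less_imp_le)+
    finally show "(\<Sum>k<N. cmod (fps_nth (\<Prod>m=1..l.
            inverse (fps_const (z j - of_nat m) + fps_const (of_real L) * fps_X)) k))
        \<le> (1 / (cmod (1 - z j) - L)) ^ l"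
      by simp
  qed
  also have "\<dots> = (1 / (\<Prod>j=1..f. cmod (1 - of_real L * \<rho> - mu j) - L)) ^ l"
    by (simp add: z_def prod_dividef diff_diff_eq flip: prod_power_distrib)
  finally show ?thesis .
qed

lemma norm_residue_gfun_le:
  assumes lam: "\<forall>j\<in>{1..f}. lam j = L" "0 < L" "L < 1"
    and re_le: "\<forall>j\<in>{1..f}. Re (complex_of_real (lam j) * \<rho> + mu j) \<le> 0"
    and h: "h analytic_on {0}"
    and polar: "\<forall>\<^sub>F s in at 0. gfun f lam mu eta u (s + \<rho>) - (\<Sum>j=1..n. c j / s ^ j) = h s"
    and C: "\<forall>j\<in>{1..n}. cmod (c j) \<le> C" "0 \<le> C"
  shows "cmod (residue (gfun f lam mu eta u) (\<rho> - of_nat l / of_real L)) \<le>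
    C * (exp (u / L) / (\<Prod>j=1..f. cmod (1 - complex_of_real (lam j) * \<rho> - mu j) - lam j)) ^ l"
proof -
  define Rs where "Rs = shift_factor_fps f L mu l \<rho>"
  define P where "P = (\<Prod>j=1..f. cmod (1 - complex_of_real (lam j) * \<rho> - mu j) - lam j)"
  have re: "\<forall>j\<in>{1..f}. Re (of_real L * \<rho> + mu j) \<le> 0"
    using re_le lam(1) by simp
  then have "\<forall>j\<in>{1..f}. \<forall>m\<in>{1..l}. of_real L * \<rho> + mu j \<noteq> of_nat m"
    by fastforce
  then have "cmod (residue (gfun f lam mu eta u) (\<rho> - of_nat l / of_real L)) =
      exp (u / L) ^ l * cmod (\<Sum>k<n. c (Suc k) * fps_nth Rs k)"
    using residue_gfun_shifted_pole[OF lam(1) _ _ h polar] lam(2)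
    by (simp add: Rs_def norm_mult field_simps flip: exp_of_nat_mult)
  also have "\<dots> \<le> exp (u / L) ^ l * (C * (\<Sum>k<n. cmod (fps_nth Rs k)))"
  proof -
    have "cmod (\<Sum>k<n. c (Suc k) * fps_nth Rs k) \<le> C * (\<Sum>k<n. cmod (fps_nth Rs k))"
      unfolding sum_distrib_left using C
      by (intro order_trans[OF norm_sum] sum_mono) (auto simp: norm_mult intro: mult_right_mono)
    then show ?thesis
      by (rule mult_left_mono) simp
  qed
  also have "\<dots> \<le> exp (u / L) ^ l * (C * (1 / P) ^ l)"
  proof -
    have "(\<Prod>j=1..f. cmod (1 - of_real L * \<rho> - mu j) - L) = P"
      unfolding P_def using lam(1) by (intro prod.cong refl) simp
    then have "(\<Sum>k<n. cmod (fps_nth Rs k)) \<le> (1 / P) ^ l"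
      unfolding Rs_def using lam re sum_norm_shift_factor_fps_le by (metis less_imp_le)
    then show ?thesis
      using C(2) by (intro mult_left_mono) simp_all
  qed
  also have "\<dots> = C * (exp (u / L) / P) ^ l"
    by (simp add: power_divide)
  finally show ?thesis
    unfolding P_def .
qed

theorem lemma5p2:
  fixes f n :: nat and lam :: "nat \<Rightarrow> real" and mu :: "nat \<Rightarrow> complex"
    and eta u :: real and \<rho> :: complex and c :: "nat \<Rightarrow> complex"
  assumes f_ge: "f \<ge> 1"
    and lam_eq: "\<forall>j\<in>{1..f}. lam j = lam 1"
    and lam_pos: "0 < lam 1" and lam_lt: "lam 1 < 1"
    and eta: "-1 < eta" "eta < 1"
    and pole: "is_pole (gfun f lam mu eta u) \<rho>"
    and order: "zorder (gfun f lam mu eta u) \<rho> = - int n"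
    and re_le: "\<forall>j\<in>{1..f}. Re (complex_of_real (lam j) * \<rho> + mu j) \<le> 0"
    and small: "exp (u / lam 1) / (\<Prod>j=1..f. cmod (1 - complex_of_real (lam j) * \<rho> - mu j) - lam j) < 1/2"
    and polar: "\<exists>h. h analytic_on {0} \<and>
       (\<forall>\<^sub>F s in at 0. gfun f lam mu eta u (s + \<rho>) - (\<Sum>j=1..n. c j / s ^ j) = h s)"
  shows "summable (\<lambda>l. residue (gfun f lam mu eta u) (\<rho> - of_nat (Suc l) / complex_of_real (lam 1)))
       \<and> cmod (\<Sum>l. residue (gfun f lam mu eta u) (\<rho> - of_nat (Suc l) / complex_of_real (lam 1)))
           < Max ((\<lambda>j. cmod (c j)) ` {1..n})"
proof -
  define C where "C = Max ((\<lambda>j. cmod (c j)) ` {1..n})"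
  define q where "q = exp (u / lam 1) / (\<Prod>j=1..f. cmod (1 - complex_of_real (lam j) * \<rho> - mu j) - lam j)"
  obtain h where h: "h analytic_on {0}"
    and h_ev: "\<forall>\<^sub>F s in at 0. gfun f lam mu eta u (s + \<rho>) - (\<Sum>j=1..n. c j / s ^ j) = h s"
    using polar by blast
  have C_ge: "\<forall>j\<in>{1..n}. cmod (c j) \<le> C"
    by (simp add: C_def)
  \<comment> \<open>Only here is the pole used: it makes some c j nonzero, so the Max is over a nonempty set and positive.\<close>
  obtain j where "j \<in> {1..n}" "c j \<noteq> 0"
    using polar_part_nonzero_at_pole[OF pole h h_ev] by blast
  with C_ge have "C > 0"
    by (meson less_le_trans zero_less_norm_iff)
  have "cmod (residue (gfun f lam mu eta u) (\<rho> - of_nat (Suc l) / complex_of_real (lam 1))) \<le> C * q ^ Suc l"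
    for l
    unfolding q_def using \<open>C > 0\<close>
    by (intro norm_residue_gfun_le[OF lam_eq lam_pos lam_lt re_le h h_ev C_ge]) simp
  moreover have "q < 1/2"
    using small by (simp add: q_def)
  ultimately show ?thesis
    unfolding C_def[symmetric] using \<open>C > 0\<close> by (rule norm_suminf_lt_of_geometric_bound)
qed

end
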